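(* Let $n\in\mathbb{N}$, $g\in\mathbb{R}$, and $\mathcal{C}=\{q\in\mathbb{R}^n \mid q_1>\dots>q_n\}$. For $q\in\mathcal{C}$, $p\in\mathbb{R}^n$ define the $n\times n$ matrices $$Q_{jk}=q_j\delta_{jk},\qquad L_{jk}=p_j\delta_{jk}+\mathrm{i} g\,\frac{1-\delta_{jk}}{q_j-q_k},\qquad j,k=1,\dots,n,$$ let $v=(1,\dots,1)^\dagger\in\mathbb{R}^n$, and for $z\in\mathbb{C}$ define $$A(z)=\det(z\mathbf{1}_n-L),\qquad C(z)=\operatorname{tr}\big(Q\operatorname{adj}(z\mathbf{1}_n-L)\,vv^\dagger\big),\qquad D(z)=\operatorname{tr}\big(Q\operatorname{adj}(z\mathbf{1}_n-L)\big),$$ where $\operatorname{adj}$ denotes the adjugate matrix (transpose of the cofactor matrix). Then for every $(q,p)\in\mathcal{C}\times\mathbb{R}^n$ and every $z\in\mathbb{C}$, $$C(z)=D(z)+\frac{\mathrm{i} g}{2}A''(z),$$ where $A''$ is the second derivative of the polynomial $A$ in $z$.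
   Context: $Q$ and $L$ are the position and Lax matrices of the rational Calogero--Moser system on the phase space $\mathcal{C}\times\mathbb{R}^n$. *)

theory Defs
  imports Complex_Main "HOL-Analysis.Derivative" "Jordan_Normal_Form.Determinant"
begin

text \<open>Indices j,k = 1..n of the paper are represented by 0..<n.
  Vectors q, p in R^n are functions nat => real (only values below n matter).\<close>

definition mtrace :: "'a::comm_ring_1 mat \<Rightarrow> 'a" where
  "mtrace M = (\<Sum>i<dim_row M. M $$ (i,i))"

definition CM_Q :: "nat \<Rightarrow> (nat \<Rightarrow> real) \<Rightarrow> complex mat" where
  "CM_Q n q = mat n n (\<lambda>(j,k). if j = k then complex_of_real (q j) else 0)"

definition CM_L :: "nat \<Rightarrow> real \<Rightarrow> (nat \<Rightarrow> real) \<Rightarrow> (nat \<Rightarrow> real) \<Rightarrow> complex mat" where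
  "CM_L n g q p = mat n n (\<lambda>(j,k).
      (if j = k then complex_of_real (p j) else 0)
      + \<i> * complex_of_real g * (if j = k then 0 else 1) / complex_of_real (q j - q k))"

text \<open>v v^dagger for v = (1,...,1): the all-ones matrix.\<close>
definition ones_mat :: "nat \<Rightarrow> complex mat" where
  "ones_mat n = mat n n (\<lambda>_. 1)"

definition CM_A :: "nat \<Rightarrow> real \<Rightarrow> (nat \<Rightarrow> real) \<Rightarrow> (nat \<Rightarrow> real) \<Rightarrow> complex \<Rightarrow> complex" where
  "CM_A n g q p z = det (z \<cdot>\<^sub>m 1\<^sub>m n - CM_L n g q p)"

definition CM_C :: "nat \<Rightarrow> real \<Rightarrow> (nat \<Rightarrow> real) \<Rightarrow> (nat \<Rightarrow> real) \<Rightarrow> complex \<Rightarrow> complex" where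
  "CM_C n g q p z = mtrace (CM_Q n q * adj_mat (z \<cdot>\<^sub>m 1\<^sub>m n - CM_L n g q p) * ones_mat n)"

definition CM_D :: "nat \<Rightarrow> real \<Rightarrow> (nat \<Rightarrow> real) \<Rightarrow> (nat \<Rightarrow> real) \<Rightarrow> complex \<Rightarrow> complex" where
  "CM_D n g q p z = mtrace (CM_Q n q * adj_mat (z \<cdot>\<^sub>m 1\<^sub>m n - CM_L n g q p))"

end

theory Submission
  imports Defs "Jordan_Normal_Form.Char_Poly"
begin

text \<open>
  Work over \<open>\<complex>[z]\<close> with \<open>M = z \<cdot> 1 - L\<close>, \<open>Ad = adj M\<close>, \<open>a = det M\<close> and
  \<open>K = J - 1\<close>, where \<open>J\<close> is the all-ones matrix. The Calogero--Moser relation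
  \<open>Q L - L Q = \<i> g K\<close> gives \<open>Q M - M Q = c K\<close> with \<open>c = - \<i> g\<close>. Since \<open>Ad\<close> commutes
  with \<open>M\<close> and \<open>Ad M = a \<cdot> 1\<close>, cyclicity of the trace yields \<open>tr (Ad K) = tr (Ad K Ad) = 0\<close>
  and \<open>2 a tr (Q Ad K) = - c tr (Ad K Ad K)\<close>. As \<open>J\<close> has rank one, the last trace is
  \<open>(tr Ad)\<^sup>2 - tr (Ad\<^sup>2)\<close>, which equals \<open>a a''\<close> by Jacobi's formula \<open>a' = tr Ad\<close>
  differentiated once more. Cancelling the monic \<open>a\<close> gives \<open>2 tr (Q Ad K) = \<i> g a''\<close>, and
  evaluating at \<open>z\<close> turns \<open>tr (Q Ad K)\<close> into \<open>C(z) - D(z)\<close>. For \<open>g = 0\<close> the trace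
  identities are empty; then \<open>Ad\<close> commutes with \<open>Q\<close>, whose diagonal entries are distinct, so
  \<open>Ad\<close> is diagonal and \<open>tr (Q Ad K) = 0\<close>.
\<close>

section \<open>Traces\<close>

lemma mtrace_add:
  assumes "A \<in> carrier_mat n n" "B \<in> carrier_mat n n"
  shows "mtrace (A + B) = mtrace A + mtrace B"
  using assms unfolding mtrace_def by (simp add: sum.distrib)

lemma mtrace_diff:
  assumes "A \<in> carrier_mat n n" "B \<in> carrier_mat n n"
  shows "mtrace (A - B) = mtrace A - mtrace B"
  using assms unfolding mtrace_def by (simp add: sum_subtractf)

lemma mtrace_smult:
  assumes "A \<in> carrier_mat n n"
  shows "mtrace (k \<cdot>\<^sub>m A) = k * mtrace A"
  using assms unfolding mtrace_def by (simp add: sum_distrib_left)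

lemma mtrace_mult:
  assumes "A \<in> carrier_mat n m" "B \<in> carrier_mat m n"
  shows "mtrace (A * B) = (\<Sum>i<n. \<Sum>k<m. A $$ (i,k) * B $$ (k,i))"
  using assms unfolding mtrace_def by (auto simp: scalar_prod_def atLeast0LessThan intro!: sum.cong)

lemma mtrace_mult_comm:
  assumes "A \<in> carrier_mat n m" "B \<in> carrier_mat m n"
  shows "mtrace (A * B) = mtrace (B * A)"
  using assms by (simp add: mtrace_mult sum.swap[where A = "{..<n}"] mult.commute)

lemma smult_one_mult_mat [simp]:
  fixes A :: "'a::comm_ring_1 mat"
  shows "dim_row A = n \<Longrightarrow> (a \<cdot>\<^sub>m 1\<^sub>m n) * A = a \<cdot>\<^sub>m A"
  using mult_smult_assoc_mat[of "1\<^sub>m n" n n A "dim_col A" a] by auto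

lemma mult_smult_one_mat [simp]:
  fixes A :: "'a::comm_ring_1 mat"
  shows "dim_col A = n \<Longrightarrow> A * (a \<cdot>\<^sub>m 1\<^sub>m n) = a \<cdot>\<^sub>m A"
  using mult_smult_distrib[of A "dim_row A" n "1\<^sub>m n" n a] by auto

lemma mult_minus_one_mat:
  fixes A :: "'a::comm_ring_1 mat"
  assumes "A \<in> carrier_mat m n" "B \<in> carrier_mat n n"
  shows "A * (B - 1\<^sub>m n) = A * B - A"
  using assms by (simp add: mult_minus_distrib_mat[of A m n B n] right_mult_one_mat)

lemma mult_all_ones_index:
  fixes X :: "'a::comm_ring_1 mat"
  assumes "X \<in> carrier_mat n n" "i < n" "j < n"
  shows "(X * mat n n (\<lambda>_. 1)) $$ (i,j) = (\<Sum>k<n. X $$ (i,k))"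
  using assms by (auto simp: scalar_prod_def atLeast0LessThan intro!: sum.cong)

lemma mtrace_mult_all_ones:
  fixes X :: "'a::comm_ring_1 mat"
  assumes "X \<in> carrier_mat n n"
  shows "mtrace (X * mat n n (\<lambda>_. 1)) = (\<Sum>i<n. \<Sum>k<n. X $$ (i,k))"
  using assms mult_all_ones_index[OF assms] unfolding mtrace_def
  by (auto intro!: sum.cong simp del: index_mult_mat(1))

text \<open>All rows of \<open>X * J\<close> are constant, so \<open>X * J\<close> has rank at most one.\<close>
lemma mtrace_mult_all_ones_square:
  assumes X: "X \<in> carrier_mat n n" and Y: "Y \<in> carrier_mat n n"
  shows "mtrace (X * mat n n (\<lambda>_. 1) * (Y * mat n n (\<lambda>_. 1)))
     = mtrace (X * mat n n (\<lambda>_. 1)) * mtrace (Y * mat n n (\<lambda>_. 1))"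
proof -
  let ?J = "mat n n (\<lambda>_. 1)"
  have "mtrace (X * ?J * (Y * ?J)) = (\<Sum>i<n. \<Sum>k<n. (X * ?J) $$ (i,k) * (Y * ?J) $$ (k,i))"
    using X Y by (intro mtrace_mult) auto
  also have "\<dots> = (\<Sum>i<n. \<Sum>k<n. (\<Sum>l<n. X $$ (i,l)) * (\<Sum>l<n. Y $$ (k,l)))"
    using X Y by (simp add: mult_all_ones_index del: index_mult_mat)
  also have "\<dots> = (\<Sum>i<n. \<Sum>l<n. X $$ (i,l)) * (\<Sum>k<n. \<Sum>l<n. Y $$ (k,l))"
    by (rule sum_product[symmetric])
  finally show ?thesis using X Y by (simp only: mtrace_mult_all_ones)
qed

lemma mtrace_mult_offdiag_ones:
  fixes A :: "'a::comm_ring_1 mat"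
  assumes "A \<in> carrier_mat n n"
  shows "mtrace (A * (mat n n (\<lambda>_. 1) - 1\<^sub>m n)) = mtrace (A * mat n n (\<lambda>_. 1)) - mtrace A"
  using assms by (simp add: mult_minus_one_mat[of _ n n] mtrace_diff[of _ n])

lemma mtrace_offdiag_ones_square:
  fixes X :: "'a::comm_ring_1 mat"
  assumes X: "X \<in> carrier_mat n n" and K: "K = mat n n (\<lambda>_. 1) - 1\<^sub>m n"
    and XK: "mtrace (X * K) = 0" and XKX: "mtrace (X * K * X) = 0"
  shows "mtrace (X * K * X * K) = mtrace X ^ 2 - mtrace (X * X)"
proof -
  define J :: "'a mat" where "J = mat n n (\<lambda>_. 1)"
  have KJ: "K = J - 1\<^sub>m n" unfolding K J_def ..
  have [simp]: "J \<in> carrier_mat n n" "K \<in> carrier_mat n n" and [simp]: "X \<in> carrier_mat n n"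
    using X by (auto simp: J_def K)
  have mc[simp]: "A * B \<in> carrier_mat n n"
    if "A \<in> carrier_mat n n" "B \<in> carrier_mat n n" for A B :: "'a mat"
    using that by simp
  note times_K = mult_minus_one_mat[of _ n n J, folded KJ]
  have trXJ: "mtrace (X * J) = mtrace X"
    using XK by (simp add: times_K mtrace_diff[of _ n] mc)
  have XKX_eq: "X * K * X = X * J * X - X * X"
    by (simp add: times_K minus_mult_distrib_mat[of _ n n _ _ n] mc)
  have trXXJ: "mtrace (X * X * J) = mtrace (X * X)"
  proof -
    have "mtrace (X * X * J) = mtrace ((X * J) * X)"
      using mtrace_mult_comm[of X n n "X * J"] by (simp add: assoc_mult_mat[of X n n X n J n] mc)
    also have "\<dots> = mtrace (X * X)"
      using XKX by (simp add: XKX_eq mtrace_diff[of _ n] mc)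
    finally show ?thesis .
  qed
  have "mtrace (X * K * X * K) = mtrace (X * K * X * J)"
    using XKX by (simp add: times_K[of "X * K * X"] mtrace_diff[of _ n] mc del: assoc_mult_mat)
  also have "X * K * X * J = X * J * X * J - X * X * J"
    unfolding XKX_eq by (rule minus_mult_distrib_mat[of _ n n _ _ n]) (auto intro: mc)
  also have "mtrace \<dots> = mtrace ((X * J) * (X * J)) - mtrace (X * X)"
    by (simp add: mtrace_diff[of _ n] trXXJ assoc_mult_mat[of "X * J" n n X n J n])
  also have "mtrace ((X * J) * (X * J)) = mtrace X ^ 2"
    using mtrace_mult_all_ones_square[OF X X] trXJ by (simp add: J_def power2_eq_square)
  finally show ?thesis .
qed

section \<open>Adjugates and commutators\<close>

locale adj_commutator =
  fixes n :: nat and M Ad Q C :: "'a::comm_ring_1 mat" and a :: 'a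
  assumes carrier [simp]: "M \<in> carrier_mat n n" "Ad \<in> carrier_mat n n"
      "Q \<in> carrier_mat n n" "C \<in> carrier_mat n n"
    and adj_mult: "Ad * M = a \<cdot>\<^sub>m 1\<^sub>m n" and mult_adj: "M * Ad = a \<cdot>\<^sub>m 1\<^sub>m n"
    and commutator: "Q * M = M * Q + C"
begin

lemma mult_carrier [simp]:
  "A \<in> carrier_mat n n \<Longrightarrow> B \<in> carrier_mat n n \<Longrightarrow> A * B \<in> carrier_mat n n"
  by simp

lemmas dims [simp] = carrier_matD[OF carrier(1)] carrier_matD[OF carrier(2)]
  carrier_matD[OF carrier(3)] carrier_matD[OF carrier(4)]

lemmas mat_simps = assoc_mult_mat[of _ n n _ n _ n]
  mult_add_distrib_mat[of _ n n _ n] add_mult_distrib_mat[of _ n n _ _ n]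
  mult_minus_distrib_mat[of _ n n _ n] minus_mult_distrib_mat[of _ n n _ _ n]
  mult_smult_assoc_mat[of _ n n _ n] mult_smult_distrib[of _ n n _ n]
  mtrace_add[of _ n] mtrace_diff[of _ n] mtrace_smult[of _ n]

lemma adj_mult_commutator: "Ad * (Q * M) = a \<cdot>\<^sub>m Q + Ad * C"
proof -
  have "Ad * (M * Q) = a \<cdot>\<^sub>m Q"
    by (simp add: assoc_mult_mat[of Ad n n M n Q n, symmetric] adj_mult)
  then show ?thesis
    by (simp add: commutator mat_simps)
qed

lemma commutator_mult_adj: "M * (Q * Ad) = a \<cdot>\<^sub>m Q - C * Ad"
proof -
  have "M * Q = Q * M - C"
    unfolding commutator by (rule eq_matI) auto
  then have "M * Q * Ad = Q * M * Ad - C * Ad"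
    by (simp add: minus_mult_distrib_mat[of _ n n _ _ n])
  also have "Q * M * Ad = a \<cdot>\<^sub>m Q"
    by (simp add: assoc_mult_mat[of Q n n M n Ad n] mult_adj)
  finally show ?thesis by (simp add: mat_simps)
qed

lemma mtrace_adj_commutator: "mtrace (Ad * C) = 0"
proof -
  have "mtrace (Ad * (Q * M)) = mtrace (M * Ad * Q)"
    using mtrace_mult_comm[of "Ad * Q" n n M] by (simp add: mat_simps)
  also have "\<dots> = a * mtrace Q"
    by (simp add: mult_adj mat_simps)
  finally show ?thesis
    by (simp add: adj_mult_commutator mat_simps)
qed

lemma adj_commutator_adj: "a \<cdot>\<^sub>m (Ad * Q) = a \<cdot>\<^sub>m (Q * Ad) + Ad * C * Ad"
proof -
  have "Ad * (Q * M) * Ad = a \<cdot>\<^sub>m (Ad * Q)"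
    by (simp add: assoc_mult_mat[of Q n n M n Ad n] mult_adj mat_simps)
  moreover have "Ad * (Q * M) * Ad = a \<cdot>\<^sub>m (Q * Ad) + Ad * C * Ad"
    by (simp add: adj_mult_commutator mat_simps)
  ultimately show ?thesis by simp
qed

lemma mtrace_adj_commutator_adj: "mtrace (Ad * C * Ad) = 0"
proof -
  have "mtrace (Ad * Q) = mtrace (Q * Ad)"
    by (rule mtrace_mult_comm) auto
  moreover have "a * mtrace (Ad * Q) = a * mtrace (Q * Ad) + mtrace (Ad * C * Ad)"
    using arg_cong[OF adj_commutator_adj, of mtrace] by (simp add: mat_simps)
  ultimately show ?thesis by simp
qed

lemma mtrace_Q_adj_commutator: "mtrace (Q * Ad * C) = - mtrace (Ad * Q * C)"
proof -
  have "mtrace (Q * Ad * Q * M) = a * mtrace (Q * Q) + mtrace (Q * Ad * C)"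
    using arg_cong[OF adj_mult_commutator, of "\<lambda>X. mtrace (Q * X)"] by (simp add: mat_simps)
  moreover have "mtrace (M * (Q * Ad * Q)) = a * mtrace (Q * Q) - mtrace (C * (Ad * Q))"
    using arg_cong[OF commutator_mult_adj, of "\<lambda>X. mtrace (X * Q)"] by (simp add: mat_simps)
  moreover have "mtrace (Q * Ad * Q * M) = mtrace (M * (Q * Ad * Q))"
    by (rule mtrace_mult_comm) auto
  moreover have "mtrace (C * (Ad * Q)) = mtrace (Ad * Q * C)"
    by (rule mtrace_mult_comm) auto
  ultimately have "mtrace (Q * Ad * C) + mtrace (Ad * Q * C) = 0"
    by (simp add: algebra_simps)
  then show ?thesis by (simp add: eq_neg_iff_add_eq_0)
qed

lemma two_mtrace_Q_adj_commutator: "2 * a * mtrace (Q * Ad * C) = - mtrace (Ad * C * Ad * C)"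
proof -
  have "a * mtrace (Ad * Q * C) = a * mtrace (Q * Ad * C) + mtrace (Ad * C * Ad * C)"
    using arg_cong[OF adj_commutator_adj, of "\<lambda>X. mtrace (X * C)"] by (simp add: mat_simps)
  then show ?thesis
    using mtrace_Q_adj_commutator by (simp add: algebra_simps)
qed

end

lemma two_mtrace_Q_adj_offdiag_ones:
  fixes n :: nat and M Ad Q :: "'a::idom mat"
  defines "K \<equiv> mat n n (\<lambda>_. 1) - 1\<^sub>m n"
  assumes "adj_commutator n M Ad Q (c \<cdot>\<^sub>m K) a" and c: "c \<noteq> 0"
  shows "2 * a * mtrace (Q * Ad * K) = - c * (mtrace Ad ^ 2 - mtrace (Ad * Ad))"
proof -
  interpret adj_commutator n M Ad Q "c \<cdot>\<^sub>m K" a by fact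
  have [simp]: "K \<in> carrier_mat n n" unfolding K_def by (simp add: minus_carrier_mat)
  have "mtrace (Ad * K) = 0"
    using mtrace_adj_commutator c by (simp add: mat_simps)
  moreover have "mtrace (Ad * K * Ad) = 0"
    using mtrace_adj_commutator_adj c by (simp add: mat_simps)
  ultimately have "mtrace (Ad * K * Ad * K) = mtrace Ad ^ 2 - mtrace (Ad * Ad)"
    by (intro mtrace_offdiag_ones_square[OF carrier(2) meta_eq_to_obj_eq[OF K_def]])
  moreover have "c * (2 * a * mtrace (Q * Ad * K)) = c * (- c * mtrace (Ad * K * Ad * K))"
    using two_mtrace_Q_adj_commutator by (simp add: mat_simps algebra_simps)
  ultimately have "c * (2 * a * mtrace (Q * Ad * K)) = c * (- c * (mtrace Ad ^ 2 - mtrace (Ad * Ad)))"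
    by simp
  then show ?thesis
    using c mult_left_cancel by blast
qed

lemma smult_mat_cancel:
  fixes A B :: "'a::idom mat"
  assumes "k \<cdot>\<^sub>m A = k \<cdot>\<^sub>m B" "k \<noteq> 0" "A \<in> carrier_mat n m" "B \<in> carrier_mat n m"
  shows "A = B"
proof (rule eq_matI)
  fix i j assume "i < dim_row B" "j < dim_col B"
  then show "A $$ (i,j) = B $$ (i,j)"
    using arg_cong[OF assms(1), of "\<lambda>X. X $$ (i,j)"] assms(2-4) by simp
qed (use assms in auto)

lemma offdiag_zero_if_commutes_mat_diag:
  fixes X :: "'a::idom mat"
  assumes X: "X \<in> carrier_mat n n" and comm: "X * mat_diag n d = mat_diag n d * X"
    and inj: "inj_on d {..<n}" and jk: "j < n" "k < n" "j \<noteq> k"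
  shows "X $$ (j,k) = 0"
proof -
  have "X $$ (j,k) * d k = d j * X $$ (j,k)"
    using arg_cong[OF comm, of "\<lambda>A. A $$ (j,k)"] X jk
    by (simp add: mat_diag_mult_left[of X n n] mat_diag_mult_right[of X n n])
  then have "X $$ (j,k) * (d k - d j) = 0"
    by (simp add: algebra_simps)
  moreover have "d k \<noteq> d j"
    using inj jk by (auto dest: inj_onD)
  ultimately show ?thesis by simp
qed

lemma mtrace_mat_diag_mult_offdiag:
  fixes X K :: "'a::comm_ring_1 mat"
  assumes X: "X \<in> carrier_mat n n" and K: "K \<in> carrier_mat n n"
    and X_offdiag: "\<And>j k. j < n \<Longrightarrow> k < n \<Longrightarrow> j \<noteq> k \<Longrightarrow> X $$ (j,k) = 0"
    and K_diag: "\<And>j. j < n \<Longrightarrow> K $$ (j,j) = 0"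
  shows "mtrace (mat_diag n d * X * K) = 0"
proof -
  have "mtrace (mat_diag n d * X * K) = (\<Sum>j<n. \<Sum>k<n. d j * X $$ (j,k) * K $$ (k,j))"
    using X K by (simp add: mtrace_mult[of _ n n K] mat_diag_mult_left[of X n n])
  also have "\<dots> = 0"
    using X_offdiag K_diag by (intro sum.neutral ballI) (metis lessThan_iff mult_not_zero)
  finally show ?thesis .
qed

lemma mtrace_mat_diag_adj_offdiag_ones_eq_0:
  fixes n :: nat and M Ad :: "'a::idom mat"
  defines "K \<equiv> mat n n (\<lambda>_. 1) - 1\<^sub>m n"
  assumes "adj_commutator n M Ad (mat_diag n d) (0\<^sub>m n n) a" and "a \<noteq> 0" and "inj_on d {..<n}"
  shows "mtrace (mat_diag n d * Ad * K) = 0"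
proof -
  interpret adj_commutator n M Ad "mat_diag n d" "0\<^sub>m n n" a by fact
  have "a \<cdot>\<^sub>m (Ad * mat_diag n d) = a \<cdot>\<^sub>m (mat_diag n d * Ad)"
    using adj_commutator_adj by simp
  then have "Ad * mat_diag n d = mat_diag n d * Ad"
    using \<open>a \<noteq> 0\<close> by (rule smult_mat_cancel) auto
  then show ?thesis
    using offdiag_zero_if_commutes_mat_diag[OF carrier(2) _ \<open>inj_on d {..<n}\<close>]
    by (intro mtrace_mat_diag_mult_offdiag) (auto simp: K_def)
qed

section \<open>The characteristic matrix\<close>

lemma map_mat_pderiv_mult:
  fixes X Y :: "'a::idom poly mat"
  assumes "X \<in> carrier_mat n m" "Y \<in> carrier_mat m k"
  shows "map_mat pderiv (X * Y) = map_mat pderiv X * Y + X * map_mat pderiv Y"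
  by (rule eq_matI)
    (use assms in \<open>auto simp: scalar_prod_def pderiv_sum pderiv_mult sum.distrib mult.commute\<close>)

lemma map_mat_pderiv_char_poly_matrix:
  fixes L :: "'a::idom mat"
  assumes "L \<in> carrier_mat n n"
  shows "map_mat pderiv (char_poly_matrix L) = 1\<^sub>m n"
  by (rule eq_matI) (use assms in \<open>auto simp: char_poly_matrix_def pderiv_add pderiv_pCons\<close>)

lemma mat_delete_char_poly_matrix:
  fixes L :: "'a::idom mat"
  assumes "L \<in> carrier_mat n n" "i < n"
  shows "mat_delete (char_poly_matrix L) i i = char_poly_matrix (mat_delete L i i)"
  by (rule eq_matI) (use assms in \<open>auto simp: char_poly_matrix_def mat_delete_def\<close>)

lemma pderiv_char_poly_eq_mtrace_adj:
  fixes L :: "'a::idom mat"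
  assumes L: "L \<in> carrier_mat n n"
  shows "pderiv (char_poly L) = mtrace (adj_mat (char_poly_matrix L))"
proof -
  have "mtrace (adj_mat (char_poly_matrix L)) = (\<Sum>i<n. cofactor (char_poly_matrix L) i i)"
    using L unfolding mtrace_def adj_mat_def by (auto simp: char_poly_matrix_def)
  also have "\<dots> = (\<Sum>i<n. char_poly (mat_delete L i i))"
    using L by (auto simp: cofactor_def mat_delete_char_poly_matrix char_poly_def)
  finally show ?thesis
    using pderiv_char_poly[OF L] by simp
qed

text \<open>Differentiating \<open>adj M * M = a \<cdot> 1\<close> gives \<open>a \<cdot> adj M' + adj M * adj M = a' \<cdot> adj M\<close>;
  take traces and use \<open>a' = tr (adj M)\<close>.\<close>
lemma char_poly_mult_pderiv_pderiv:
  fixes L :: "'a::idom mat"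
  assumes L: "L \<in> carrier_mat n n"
  defines "a \<equiv> char_poly L" and "Ad \<equiv> adj_mat (char_poly_matrix L)"
  shows "a * pderiv (pderiv a) = mtrace Ad ^ 2 - mtrace (Ad * Ad)"
proof -
  let ?M = "char_poly_matrix L"
  let ?Ad' = "map_mat pderiv Ad"
  have M: "?M \<in> carrier_mat n n" using L by simp
  have Ad: "Ad \<in> carrier_mat n n" unfolding Ad_def using adj_mat(1)[OF M] .
  have Ad': "?Ad' \<in> carrier_mat n n" using Ad by simp
  have adj_mult: "Ad * ?M = a \<cdot>\<^sub>m 1\<^sub>m n" and mult_adj: "?M * Ad = a \<cdot>\<^sub>m 1\<^sub>m n"
    unfolding Ad_def a_def char_poly_def using adj_mat(2,3)[OF M] by auto
  have "?Ad' * ?M + Ad = map_mat pderiv (Ad * ?M)"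
    using map_mat_pderiv_mult[OF Ad M] map_mat_pderiv_char_poly_matrix[OF L] Ad by simp
  also have "\<dots> = pderiv a \<cdot>\<^sub>m 1\<^sub>m n"
    unfolding adj_mult by (rule eq_matI) (auto simp: pderiv_mult)
  finally have "(?Ad' * ?M + Ad) * Ad = pderiv a \<cdot>\<^sub>m Ad"
    using Ad by simp
  moreover have "(?Ad' * ?M + Ad) * Ad = a \<cdot>\<^sub>m ?Ad' + Ad * Ad"
    using Ad Ad' M by (simp add: add_mult_distrib_mat[of _ n n _ Ad n] mult_adj)
  ultimately have "a * mtrace ?Ad' + mtrace (Ad * Ad) = pderiv a * mtrace Ad"
    using arg_cong[of _ _ mtrace] Ad Ad'
    by (metis mtrace_add[of _ n] mtrace_smult mult_carrier_mat smult_carrier_mat)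
  moreover have "mtrace ?Ad' = pderiv (mtrace Ad)"
    using Ad unfolding mtrace_def by (auto simp: pderiv_sum)
  moreover have "pderiv a = mtrace Ad"
    unfolding a_def Ad_def by (rule pderiv_char_poly_eq_mtrace_adj[OF L])
  ultimately show ?thesis
    by (simp add: power2_eq_square algebra_simps)
qed

lemma char_poly_nonzero:
  fixes L :: "'a::comm_ring_1 mat"
  assumes "L \<in> carrier_mat n n"
  shows "char_poly L \<noteq> 0"
  using degree_monic_char_poly[OF assms] by auto

lemma mat_diag_char_poly_matrix_commutator:
  fixes L C :: "'a::comm_ring_1 mat"
  assumes L: "L \<in> carrier_mat n n" and C: "C \<in> carrier_mat n n"
    and comm: "mat_diag n d * L = L * mat_diag n d + C"
  shows "mat_diag n (\<lambda>j. [:d j:]) * char_poly_matrix L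
     = char_poly_matrix L * mat_diag n (\<lambda>j. [:d j:]) + map_mat (\<lambda>x. [:- x:]) C"
proof (rule eq_matI)
  fix j k
  assume "j < dim_row (char_poly_matrix L * mat_diag n (\<lambda>j. [:d j:]) + map_mat (\<lambda>x. [:- x:]) C)"
    and "k < dim_col (char_poly_matrix L * mat_diag n (\<lambda>j. [:d j:]) + map_mat (\<lambda>x. [:- x:]) C)"
  then have jk: "j < n" "k < n" using C by auto
  have "d j * L $$ (j,k) = L $$ (j,k) * d k + C $$ (j,k)"
    using arg_cong[OF comm, of "\<lambda>X. X $$ (j,k)"] L C jk
    by (simp add: mat_diag_mult_left[of L n n] mat_diag_mult_right[of L n n])
  then show "(mat_diag n (\<lambda>j. [:d j:]) * char_poly_matrix L) $$ (j,k)
      = (char_poly_matrix L * mat_diag n (\<lambda>j. [:d j:]) + map_mat (\<lambda>x. [:- x:]) C) $$ (j,k)"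
    using L C jk
    by (cases "j = k")
      (auto simp: mat_diag_mult_left[of _ n n] mat_diag_mult_right[of _ n n] char_poly_matrix_def
        algebra_simps)
qed (use L C in \<open>auto simp: mat_diag_def char_poly_matrix_def\<close>)

lemma two_mtrace_mat_diag_adj_char_poly_matrix:
  fixes n :: nat and L :: "'a::idom mat" and c :: "'a poly"
  defines "M \<equiv> char_poly_matrix L" and "K \<equiv> mat n n (\<lambda>_. 1) - 1\<^sub>m n"
  assumes L: "L \<in> carrier_mat n n" and inj: "inj_on d {..<n}"
    and comm: "mat_diag n d * M = M * mat_diag n d + c \<cdot>\<^sub>m K"
  shows "2 * mtrace (mat_diag n d * adj_mat M * K) = - c * pderiv (pderiv (char_poly L))"
proof -
  let ?a = "char_poly L" and ?Ad = "adj_mat M"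
  have M: "M \<in> carrier_mat n n" unfolding M_def using L by simp
  have K: "K \<in> carrier_mat n n" unfolding K_def by (simp add: minus_carrier_mat)
  have a: "?a \<noteq> 0" using char_poly_nonzero[OF L] .
  have adj: "adj_commutator n M ?Ad (mat_diag n d) (c \<cdot>\<^sub>m K) ?a"
    using M K adj_mat[OF M] comm unfolding M_def char_poly_def by unfold_locales auto
  show ?thesis
  proof (cases "c = 0")
    case True
    have "c \<cdot>\<^sub>m K = 0\<^sub>m n n" using True K by (intro eq_matI) auto
    then have "mtrace (mat_diag n d * ?Ad * K) = 0"
      using mtrace_mat_diag_adj_offdiag_ones_eq_0[of n M ?Ad d ?a] adj a inj by (simp add: K_def)
    then show ?thesis using True by simp
  next
    case False
    have "?a * (2 * mtrace (mat_diag n d * ?Ad * K)) = - c * (mtrace ?Ad ^ 2 - mtrace (?Ad * ?Ad))"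
      using two_mtrace_Q_adj_offdiag_ones[OF adj[unfolded K_def] False]
      by (simp add: K_def ac_simps)
    also have "\<dots> = ?a * (- c * pderiv (pderiv ?a))"
      unfolding M_def char_poly_mult_pderiv_pderiv[OF L, symmetric] by (simp add: ac_simps)
    finally show ?thesis using a mult_left_cancel by blast
  qed
qed

section \<open>Evaluation at a point\<close>

lemma char_poly_matrix_eval:
  assumes "L \<in> carrier_mat n n"
  shows "map_mat (\<lambda>p. poly p z) (char_poly_matrix L) = z \<cdot>\<^sub>m 1\<^sub>m n - L"
  by (rule eq_matI) (use assms in \<open>auto simp: char_poly_matrix_def\<close>)

lemma (in comm_ring_hom) hom_mtrace:
  assumes "A \<in> carrier_mat n n"
  shows "hom (mtrace A) = mtrace (mat\<^sub>h A)"
  using assms unfolding mtrace_def by (simp add: hom_sum)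

lemma (in comm_ring_hom) hom_mtrace_mult_mult:
  assumes "A \<in> carrier_mat n n" "B \<in> carrier_mat n n" "C \<in> carrier_mat n n"
  shows "hom (mtrace (A * B * C)) = mtrace (mat\<^sub>h A * mat\<^sub>h B * mat\<^sub>h C)"
  using assms by (simp add: hom_mtrace[of _ n] mat_hom_mult[of _ n n _ n])

lemma (in comm_ring_hom) hom_adj_mat:
  assumes "A \<in> carrier_mat n n"
  shows "adj_mat (mat\<^sub>h A) = mat\<^sub>h (adj_mat A)"
proof -
  have "mat_delete (mat\<^sub>h A) i j = mat\<^sub>h (mat_delete A i j)" for i j
    by (rule eq_matI) (auto simp: mat_delete_def)
  then show ?thesis
    by (intro eq_matI) (use assms in \<open>auto simp: adj_mat_def cofactor_def hom_distribs\<close>)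
qed

lemma poly_char_poly:
  assumes "L \<in> carrier_mat n n"
  shows "poly (char_poly L) z = det (z \<cdot>\<^sub>m 1\<^sub>m n - L)"
  using comm_ring_hom.hom_det[OF poly_hom.comm_ring_hom_axioms[of z], of "char_poly_matrix L"]
  by (simp add: char_poly_def char_poly_matrix_eval[OF assms])

lemma adj_char_poly_matrix_eval:
  assumes "L \<in> carrier_mat n n"
  shows "map_mat (\<lambda>p. poly p z) (adj_mat (char_poly_matrix L)) = adj_mat (z \<cdot>\<^sub>m 1\<^sub>m n - L)"
  unfolding char_poly_matrix_eval[OF assms, symmetric]
  by (rule poly_hom.hom_adj_mat[of _ n, symmetric]) (use assms in simp)

lemma deriv_poly: "deriv (poly p) = poly (pderiv p)"
  by (rule ext) (rule DERIV_imp_deriv[OF poly_DERIV])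

section \<open>The rational Calogero--Moser system\<close>

lemma CM_L_carrier: "CM_L n g q p \<in> carrier_mat n n"
  unfolding CM_L_def by simp

lemma CM_Q_eq_mat_diag: "CM_Q n q = mat_diag n (\<lambda>j. complex_of_real (q j))"
  unfolding CM_Q_def mat_diag_def by (rule eq_matI) auto

lemma CM_commutator:
  assumes "inj_on q {..<n}"
  shows "CM_Q n q * CM_L n g q p
     = CM_L n g q p * CM_Q n q + (\<i> * complex_of_real g) \<cdot>\<^sub>m (mat n n (\<lambda>_. 1) - 1\<^sub>m n)"
proof (rule eq_matI)
  fix j k assume "j < dim_row (CM_L n g q p * CM_Q n q
      + (\<i> * complex_of_real g) \<cdot>\<^sub>m (mat n n (\<lambda>_. 1) - 1\<^sub>m n))"
    and "k < dim_col (CM_L n g q p * CM_Q n q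
      + (\<i> * complex_of_real g) \<cdot>\<^sub>m (mat n n (\<lambda>_. 1) - 1\<^sub>m n))"
  then have jk: "j < n" "k < n" by (auto simp: CM_L_def)
  have entry: "(CM_Q n q * CM_L n g q p) $$ (j,k) = q j * CM_L n g q p $$ (j,k)"
    "(CM_L n g q p * CM_Q n q) $$ (j,k) = CM_L n g q p $$ (j,k) * q k"
    using jk CM_L_carrier[of n g q p]
    by (simp_all add: CM_Q_eq_mat_diag mat_diag_mult_left[of _ n n] mat_diag_mult_right[of _ n n])
  show "(CM_Q n q * CM_L n g q p) $$ (j,k) = (CM_L n g q p * CM_Q n q
      + (\<i> * complex_of_real g) \<cdot>\<^sub>m (mat n n (\<lambda>_. 1) - 1\<^sub>m n)) $$ (j,k)"
  proof (cases "j = k")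
    case True
    then show ?thesis using jk entry by simp
  next
    case False
    then have "complex_of_real (q j) - complex_of_real (q k) \<noteq> 0"
      using assms jk by (auto dest: inj_onD)
    moreover have "CM_L n g q p $$ (j,k) = \<i> * complex_of_real g / complex_of_real (q j - q k)"
      using jk False by (simp add: CM_L_def)
    ultimately show ?thesis
      using jk entry False by (simp add: field_simps)
  qed
qed (auto simp: CM_Q_def CM_L_def)

lemma CM_char_poly_matrix_commutator:
  assumes "inj_on q {..<n}"
  shows "mat_diag n (\<lambda>j. [:complex_of_real (q j):]) * char_poly_matrix (CM_L n g q p)
     = char_poly_matrix (CM_L n g q p) * mat_diag n (\<lambda>j. [:complex_of_real (q j):])
       + [:- \<i> * complex_of_real g:] \<cdot>\<^sub>m (mat n n (\<lambda>_. 1) - 1\<^sub>m n)"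
proof -
  have "map_mat (\<lambda>x. [:- x:]) ((\<i> * complex_of_real g) \<cdot>\<^sub>m (mat n n (\<lambda>_. 1) - 1\<^sub>m n))
      = [:- \<i> * complex_of_real g:] \<cdot>\<^sub>m (mat n n (\<lambda>_. 1) - 1\<^sub>m n)"
    by (rule eq_matI) auto
  then show ?thesis
    by (simp add: mat_diag_char_poly_matrix_commutator[OF CM_L_carrier _ CM_commutator[OF assms,
        unfolded CM_Q_eq_mat_diag]] minus_carrier_mat)
qed

lemma CM_A_eq_poly: "CM_A n g q p = poly (char_poly (CM_L n g q p))"
  by (rule ext) (simp add: CM_A_def poly_char_poly[OF CM_L_carrier])

lemma CM_C_minus_CM_D:
  "CM_C n g q p z - CM_D n g q p z = poly (mtrace (mat_diag n (\<lambda>j. [:complex_of_real (q j):])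
     * adj_mat (char_poly_matrix (CM_L n g q p)) * (mat n n (\<lambda>_. 1) - 1\<^sub>m n))) z"
proof -
  let ?ev = "map_mat (\<lambda>p. poly p z)"
  let ?Q = "mat_diag n (\<lambda>j. [:complex_of_real (q j):])"
    and ?Ad = "adj_mat (char_poly_matrix (CM_L n g q p))"
    and ?K = "mat n n (\<lambda>_. 1) - 1\<^sub>m n :: complex poly mat"
  have carrier: "?Q \<in> carrier_mat n n" "?Ad \<in> carrier_mat n n" "?K \<in> carrier_mat n n"
    using adj_mat(1)[of "char_poly_matrix (CM_L n g q p)" n] CM_L_carrier
    by (auto simp: minus_carrier_mat)
  have "?ev ?Q = CM_Q n q"
    unfolding CM_Q_eq_mat_diag by (rule eq_matI) (auto simp: mat_diag_def)
  moreover have "?ev ?Ad = adj_mat (z \<cdot>\<^sub>m 1\<^sub>m n - CM_L n g q p)"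
    by (rule adj_char_poly_matrix_eval[OF CM_L_carrier])
  moreover have "?ev ?K = ones_mat n - 1\<^sub>m n"
    unfolding ones_mat_def by (rule eq_matI) auto
  moreover have "CM_Q n q * adj_mat (z \<cdot>\<^sub>m 1\<^sub>m n - CM_L n g q p) \<in> carrier_mat n n"
    using adj_mat(1)[of "z \<cdot>\<^sub>m 1\<^sub>m n - CM_L n g q p" n] CM_L_carrier
    by (auto simp: CM_Q_eq_mat_diag minus_carrier_mat intro!: mult_carrier_mat[of _ n n _ n])
  ultimately show ?thesis
    unfolding poly_hom.hom_mtrace_mult_mult[OF carrier] CM_C_def CM_D_def ones_mat_def
    by (simp add: mtrace_mult_offdiag_ones)
qed

theorem mainTheorem2:
  fixes n :: nat and g :: real and q p :: "nat \<Rightarrow> real" and z :: complex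
  assumes "\<forall>j k. j < k \<and> k < n \<longrightarrow> q j > q k"
  shows "CM_C n g q p z = CM_D n g q p z
           + (\<i> * complex_of_real g / 2) * deriv (deriv (CM_A n g q p)) z"
proof -
  have inj: "inj_on q {..<n}"
    by (rule inj_onI) (metis assms lessThan_iff linorder_neqE_nat order_less_irrefl)
  then have inj_const: "inj_on (\<lambda>j. [:complex_of_real (q j):]) {..<n}"
    by (auto simp: inj_on_def)
  note H = two_mtrace_mat_diag_adj_char_poly_matrix[OF CM_L_carrier inj_const
      CM_char_poly_matrix_commutator[OF inj, of g p]]
  have "2 * poly (mtrace (mat_diag n (\<lambda>j. [:complex_of_real (q j):])
      * adj_mat (char_poly_matrix (CM_L n g q p)) * (mat n n (\<lambda>_. 1) - 1\<^sub>m n))) z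
      = \<i> * complex_of_real g * poly (pderiv (pderiv (char_poly (CM_L n g q p)))) z"
    using arg_cong[OF H, of "\<lambda>p. poly p z"] by simp
  then have "2 * (CM_C n g q p z - CM_D n g q p z)
      = \<i> * complex_of_real g * deriv (deriv (CM_A n g q p)) z"
    by (simp only: CM_C_minus_CM_D CM_A_eq_poly deriv_poly)
  then show ?thesis
    by (simp add: field_simps)
qed

end
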